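(* Let $B$ be a minimum-weight basis of the weighted uncertainty matroid $\mathcal{M}=(E,\mathcal{I},A,w)$. A set $Q\subseteq E$ is a certificate that verifies $B$ if and only if for every $f\in E\setminus B$ and every $e\in C_f\setminus\{f\}$, where $C_f$ is the fundamental circuit of $f$ with respect to $B$, we have $U_e(Q)\le L_f(Q)$.
   Context: A weighted uncertainty matroid $\mathcal{M}=(E,\mathcal{I},A,w)$ consists of a matroid $M=(E,\mathcal{I})$ on a finite set $E$, for each $e\in E$ a non-empty finite union $A_e$ of bounded real intervals (each open or closed), and a weight $w_e\in A_e$. Let $L_e=\inf A_e$, $U_e=\sup A_e$. A minimum-weight basis is a basis of $M$ minimizing the sum of weights $w$. A weight assignment is $w^*:E\to\mathbb{R}$ with $w^*_e\in A_e$, consistent with $Q$ if $w^*_e=w_e$ for $e\in Q$. $Q$ verifies $B$ (is a certificate for $B$) if for every weight assignment consistent with $Q$, $B$ is a minimum-weight basis with respect to it. For $Q\subseteq E$: $L_e(Q)=w_e$ if $e\in Q$, else $L_e$; $U_e(Q)=w_e$ if $e\in Q$, else $U_e$. For a basis $B$ and $f\notin B$, the fundamental circuit $C_f$ is the unique circuit contained in $B\cup\{f\}$. *)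

theory Defs
  imports Main "HOL-Library.Extended_Real" Complex_Main
begin

definition matroid :: "'a set \<Rightarrow> ('a set \<Rightarrow> bool) \<Rightarrow> bool" where
  "matroid E indep \<longleftrightarrow>
     finite E \<and>
     (\<forall>I. indep I \<longrightarrow> I \<subseteq> E) \<and>
     indep {} \<and>
     (\<forall>I J. indep J \<and> I \<subseteq> J \<longrightarrow> indep I) \<and>
     (\<forall>I J. indep I \<and> indep J \<and> card I < card J \<longrightarrow> (\<exists>x\<in>J - I. indep (insert x I)))"

definition basis :: "'a set \<Rightarrow> ('a set \<Rightarrow> bool) \<Rightarrow> 'a set \<Rightarrow> bool" where
  "basis E indep B \<longleftrightarrow> indep B \<and> (\<forall>x\<in>E - B. \<not> indep (insert x B))"

definition circuit :: "'a set \<Rightarrow> ('a set \<Rightarrow> bool) \<Rightarrow> 'a set \<Rightarrow> bool" where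
  "circuit E indep C \<longleftrightarrow> C \<subseteq> E \<and> \<not> indep C \<and> (\<forall>D. D \<subset> C \<longrightarrow> indep D)"

definition fund_circuit :: "'a set \<Rightarrow> ('a set \<Rightarrow> bool) \<Rightarrow> 'a set \<Rightarrow> 'a \<Rightarrow> 'a set" where
  "fund_circuit E indep B f = (THE C. circuit E indep C \<and> C \<subseteq> insert f B)"

definition bounded_interval :: "real set \<Rightarrow> bool" where
  "bounded_interval I \<longleftrightarrow> (\<exists>a b. a \<le> b \<and> (I = {a..b} \<or> I = {a<..<b}))"

definition uncertainty_set :: "real set \<Rightarrow> bool" where
  "uncertainty_set S \<longleftrightarrow> S \<noteq> {} \<and>
     (\<exists>\<I>. finite \<I> \<and> (\<forall>I\<in>\<I>. bounded_interval I) \<and> S = \<Union>\<I>)"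

definition weighted_uncertainty_matroid ::
  "'a set \<Rightarrow> ('a set \<Rightarrow> bool) \<Rightarrow> ('a \<Rightarrow> real set) \<Rightarrow> ('a \<Rightarrow> real) \<Rightarrow> bool" where
  "weighted_uncertainty_matroid E indep A w \<longleftrightarrow>
     matroid E indep \<and> (\<forall>e\<in>E. uncertainty_set (A e) \<and> w e \<in> A e)"

definition L :: "('a \<Rightarrow> real set) \<Rightarrow> 'a \<Rightarrow> real" where
  "L A e = Inf (A e)"

definition U :: "('a \<Rightarrow> real set) \<Rightarrow> 'a \<Rightarrow> real" where
  "U A e = Sup (A e)"

definition LQ :: "('a \<Rightarrow> real set) \<Rightarrow> ('a \<Rightarrow> real) \<Rightarrow> 'a set \<Rightarrow> 'a \<Rightarrow> real" where
  "LQ A w Q e = (if e \<in> Q then w e else L A e)"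

definition UQ :: "('a \<Rightarrow> real set) \<Rightarrow> ('a \<Rightarrow> real) \<Rightarrow> 'a set \<Rightarrow> 'a \<Rightarrow> real" where
  "UQ A w Q e = (if e \<in> Q then w e else U A e)"

definition min_weight_basis :: "'a set \<Rightarrow> ('a set \<Rightarrow> bool) \<Rightarrow> ('a \<Rightarrow> real) \<Rightarrow> 'a set \<Rightarrow> bool" where
  "min_weight_basis E indep c B \<longleftrightarrow> basis E indep B \<and>
     (\<forall>B'. basis E indep B' \<longrightarrow> sum c B \<le> sum c B')"

definition consistent_assignment ::
  "'a set \<Rightarrow> ('a \<Rightarrow> real set) \<Rightarrow> ('a \<Rightarrow> real) \<Rightarrow> 'a set \<Rightarrow> ('a \<Rightarrow> real) \<Rightarrow> bool" where
  "consistent_assignment E A w Q w' \<longleftrightarrow> (\<forall>e\<in>E. w' e \<in> A e) \<and> (\<forall>e\<in>Q. w' e = w e)"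

definition verifies ::
  "'a set \<Rightarrow> ('a set \<Rightarrow> bool) \<Rightarrow> ('a \<Rightarrow> real set) \<Rightarrow> ('a \<Rightarrow> real) \<Rightarrow> 'a set \<Rightarrow> 'a set \<Rightarrow> bool" where
  "verifies E indep A w Q B \<longleftrightarrow>
     (\<forall>w'. consistent_assignment E A w Q w' \<longrightarrow> min_weight_basis E indep w' B)"

end

theory Submission
  imports Defs
begin

(* By the cycle optimality criterion, a basis B is of minimum weight for c iff c e \<le> c f whenever
   e lies in the fundamental circuit C_f of some f \<notin> B. Hence Q verifies B iff c e \<le> c f for every
   assignment c consistent with Q and every such pair e \<noteq> f. The values of e and f can be chosen
   independently from the sets of values consistent with Q, whose supremum and infimum are U_e(Q)
   and L_f(Q), so this is the condition U_e(Q) \<le> L_f(Q).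
   The criterion is necessary because B - e + f is a basis; it is sufficient by induction on
   |B' - B|: some f \<in> B' - B can be exchanged in B' for an e \<in> C_f - {f} outside B', and this does
   not increase the weight of B'. *)

lemma sum_exchange:
  fixes c :: "'a \<Rightarrow> 'b::ab_group_add"
  assumes "finite B" "e \<in> B" "f \<notin> B"
  shows "sum c (insert f (B - {e})) = sum c B - c e + c f"
  using assms by (simp add: sum_diff1)

lemma cSup_le_cInf_iff:
  fixes S T :: "'a::conditionally_complete_lattice set"
  assumes "S \<noteq> {}" "bdd_above S" "T \<noteq> {}" "bdd_below T"
  shows "Sup S \<le> Inf T \<longleftrightarrow> (\<forall>a\<in>S. \<forall>b\<in>T. a \<le> b)"
  using assms by (auto simp: cSup_le_iff le_cInf_iff)

locale finite_matroid =
  fixes E :: "'a set" and indep :: "'a set \<Rightarrow> bool"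
  assumes matroid: "matroid E indep"
begin

lemma finite_ground: "finite E"
  using matroid by (simp add: matroid_def)

lemma indep_subset_ground: "indep I \<Longrightarrow> I \<subseteq> E"
  using matroid by (simp add: matroid_def)

lemma indep_finite: "indep I \<Longrightarrow> finite I"
  using finite_ground indep_subset_ground finite_subset by blast

lemma indep_subset: "indep J \<Longrightarrow> I \<subseteq> J \<Longrightarrow> indep I"
  using matroid unfolding matroid_def by blast

lemma indep_augment: "indep I \<Longrightarrow> indep J \<Longrightarrow> card I < card J \<Longrightarrow> \<exists>x\<in>J - I. indep (insert x I)"
  using matroid unfolding matroid_def by blast

text \<open>Over an arbitrary ground set X \<subseteq> E, \<^term>\<open>basis X indep M\<close> with M \<subseteq> X says that M
  is a maximal independent subset of X.\<close>

lemma indep_card_le_basis: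
  assumes "basis X indep M" "indep I" "I \<subseteq> X"
  shows "card I \<le> card M"
proof (rule ccontr)
  assume "\<not> card I \<le> card M"
  then obtain x where "x \<in> I - M" "indep (insert x M)"
    using indep_augment assms(1,2) by (force simp: basis_def)
  with assms show False by (auto simp: basis_def)
qed

lemma indep_card_eq_basis:
  assumes B: "basis E indep B" and I: "indep I" "card I = card B"
  shows "basis E indep I"
  unfolding basis_def
proof (intro conjI ballI notI I(1))
  fix x assume x: "x \<in> E - I" and "indep (insert x I)"
  then have "card (insert x I) \<le> card B"
    using indep_card_le_basis B indep_subset_ground by blast
  with x I indep_finite show False by simp
qed

lemma basis_subset_eq:
  assumes B: "basis E indep B" and B': "basis E indep B'" and "B \<subseteq> B'"
  shows "B = B'"
proof (rule ccontr)
  assume "B \<noteq> B'"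
  with \<open>B \<subseteq> B'\<close> obtain x where x: "x \<in> B' - B" by blast
  have "indep B'" using B' by (simp add: basis_def)
  then have "x \<in> E" "indep (insert x B)"
    using x \<open>B \<subseteq> B'\<close> indep_subset_ground[of B'] indep_subset[of B' "insert x B"] by blast+
  with x B show False by (simp add: basis_def)
qed

lemma indep_extends_to_basis:
  assumes "indep K" "K \<subseteq> X" "finite X"
  obtains M where "K \<subseteq> M" "M \<subseteq> X" "basis X indep M"
proof -
  let ?P = "\<lambda>M. indep M \<and> K \<subseteq> M \<and> M \<subseteq> X"
  have "\<forall>M. ?P M \<longrightarrow> card M < card X + 1"
    using assms(3) by (auto dest: card_mono)
  then obtain M where M: "?P M" and max: "\<And>M'. ?P M' \<Longrightarrow> card M' \<le> card M"
    using ex_has_greatest_nat[of ?P K card "card X + 1"] assms(1,2) by blast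
  have "\<not> indep (insert y M)" if y: "y \<in> X - M" for y
  proof
    assume "indep (insert y M)"
    with M y have "card (insert y M) \<le> card M" using max by blast
    moreover have "finite M" using M assms(3) by (meson finite_subset)
    ultimately show False using y by simp
  qed
  with M show thesis using that by (auto simp: basis_def)
qed

lemma dependent_contains_circuit:
  assumes "\<not> indep D" "D \<subseteq> E"
  obtains C where "circuit E indep C" "C \<subseteq> D"
proof -
  let ?P = "\<lambda>C. C \<subseteq> D \<and> \<not> indep C"
  have "?P D" using assms(1) by simp
  then obtain C where C: "?P C" and min: "\<And>C'. ?P C' \<Longrightarrow> card C \<le> card C'"
    using ex_has_least_nat[of ?P D card] by blast
  from C assms(2) have "C \<subseteq> E" by blast
  then have fin: "finite C" using finite_ground by (rule finite_subset)
  have "indep C'" if "C' \<subset> C" for C'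
  proof (rule ccontr)
    assume "\<not> indep C'"
    with C that have "card C \<le> card C'" using min by blast
    moreover have "card C' < card C" using fin that by (simp add: psubset_card_mono)
    ultimately show False by simp
  qed
  with C \<open>C \<subseteq> E\<close> have "circuit E indep C" by (simp add: circuit_def)
  with C show thesis using that by blast
qed

lemma circuit_not_subset_indep:
  assumes "circuit E indep C" "indep I"
  shows "\<not> C \<subseteq> I"
proof
  assume "C \<subseteq> I"
  with assms(2) have "indep C" by (rule indep_subset)
  with assms(1) show False by (simp add: circuit_def)
qed

lemma circuit_Diff_singleton_indep:
  assumes "circuit E indep C" "e \<in> C"
  shows "indep (C - {e})"
proof -
  have "C - {e} \<subset> C" using assms(2) by blast
  with assms(1) show ?thesis by (simp add: circuit_def)
qed

lemma circuit_subset_insert_basis_mem: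
  assumes "basis E indep B" "circuit E indep C" "C \<subseteq> insert f B"
  shows "f \<in> C"
proof (rule ccontr)
  assume "f \<notin> C"
  with assms(3) have "C \<subseteq> B" by blast
  with assms(1) circuit_not_subset_indep[OF assms(2)] show False by (simp add: basis_def)
qed

lemma basis_exchange_circuit:
  assumes B: "basis E indep B" and f: "f \<in> E - B"
    and C: "circuit E indep C" "C \<subseteq> insert f B" and e: "e \<in> C" "e \<noteq> f"
  shows "basis E indep (insert f (B - {e}))"
proof -
  let ?X = "insert f (B - {e})"
  have iB: "indep B" using B by (simp add: basis_def)
  then have fin: "finite B" by (rule indep_finite)
  have eB: "e \<in> B" using C e by blast
  have card_X: "card ?X = card B"
    using fin f card_Suc_Diff1[OF fin eB] by simp
  have "indep (C - {e})" using circuit_Diff_singleton_indep C(1) e(1) .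
  moreover have "C - {e} \<subseteq> ?X" using C by blast
  moreover have "finite ?X" using fin by simp
  \<comment> \<open>M is maximal in B + f as well, hence as large as B, hence all of B - e + f.\<close>
  ultimately obtain M where M: "C - {e} \<subseteq> M" "M \<subseteq> ?X" "basis ?X indep M"
    by (rule indep_extends_to_basis)
  have "C \<subseteq> insert e M" using M(1) by blast
  then have "\<not> indep (insert e M)" using circuit_not_subset_indep[OF C(1)] by blast
  with M(3) have "basis (insert f B) indep M"
    by (auto simp: basis_def)
  then have "card B \<le> card M"
    using indep_card_le_basis iB by blast
  then have "M = ?X"
    using card_seteq[OF \<open>finite ?X\<close> M(2)] card_X by simp
  then have "indep ?X" using M(3) by (simp add: basis_def)
  then show ?thesis using indep_card_eq_basis[OF B] card_X by blast
qed

lemma circuit_subset_insert_basis_unique: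
  assumes B: "basis E indep B" and f: "f \<in> E - B"
    and C1: "circuit E indep C1" "C1 \<subseteq> insert f B"
    and C2: "circuit E indep C2" "C2 \<subseteq> insert f B"
  shows "C1 = C2"
proof (rule ccontr)
  assume "C1 \<noteq> C2"
  moreover have "\<not> C2 \<subset> C1" using C1(1) C2(1) unfolding circuit_def by blast
  ultimately obtain e where e: "e \<in> C2" "e \<notin> C1" by blast
  moreover have "f \<in> C1" using circuit_subset_insert_basis_mem[OF B C1] .
  ultimately have "basis E indep (insert f (B - {e}))"
    using basis_exchange_circuit[OF B f C2] by blast
  then have "indep (insert f (B - {e}))" by (simp add: basis_def)
  moreover have "C1 \<subseteq> insert f (B - {e})" using C1(2) e by blast
  ultimately show False using circuit_not_subset_indep[OF C1(1)] by blast
qed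

lemma fund_circuit:
  assumes B: "basis E indep B" and f: "f \<in> E - B"
  shows "circuit E indep (fund_circuit E indep B f)" "fund_circuit E indep B f \<subseteq> insert f B"
proof -
  have "indep B" using B by (simp add: basis_def)
  then have "insert f B \<subseteq> E" using f indep_subset_ground by blast
  moreover have "\<not> indep (insert f B)" using B f by (simp add: basis_def)
  ultimately obtain C where C: "circuit E indep C" "C \<subseteq> insert f B"
    using dependent_contains_circuit by blast
  have "circuit E indep (fund_circuit E indep B f) \<and> fund_circuit E indep B f \<subseteq> insert f B"
    unfolding fund_circuit_def
    by (rule theI[of _ C]) (use C circuit_subset_insert_basis_unique[OF B f] in blast)+
  then show "circuit E indep (fund_circuit E indep B f)" "fund_circuit E indep B f \<subseteq> insert f B"
    by auto
qed

lemma basis_exchange_fund_circuit: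
  assumes "basis E indep B" "f \<in> E - B" "e \<in> fund_circuit E indep B f - {f}"
  shows "basis E indep (insert f (B - {e}))"
  using basis_exchange_circuit[OF assms(1,2) fund_circuit[OF assms(1,2)]] assms(3) by blast

lemma fund_circuit_exchange_into_basis:
  assumes B: "basis E indep B" and B': "basis E indep B'" and f: "f \<in> B' - B"
  obtains e where "e \<in> fund_circuit E indep B f - {f}" "e \<notin> B'"
    "basis E indep (insert e (B' - {f}))"
proof -
  let ?C = "fund_circuit E indep B f"
  let ?X = "B' \<union> ?C - {f}"
  have iB': "indep B'" using B' by (simp add: basis_def)
  then have fin: "finite B'" by (rule indep_finite)
  have "B' \<subseteq> E" using iB' by (rule indep_subset_ground)
  then have "f \<in> E - B" using f by blast
  then have C: "circuit E indep ?C" "?C \<subseteq> insert f B"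
    using fund_circuit[OF B] by blast+
  have "?X \<subseteq> E" using \<open>B' \<subseteq> E\<close> C(1) by (auto simp: circuit_def)
  then have "finite ?X" using finite_ground by (rule finite_subset)
  have "indep (?C - {f})"
    using circuit_Diff_singleton_indep C(1) circuit_subset_insert_basis_mem[OF B C] .
  moreover have "?C - {f} \<subseteq> ?X" by blast
  \<comment> \<open>M is as large as B', so it augments B' - f, necessarily by an element of C - f.\<close>
  ultimately obtain M where M: "?C - {f} \<subseteq> M" "M \<subseteq> ?X" "basis ?X indep M"
    using \<open>finite ?X\<close> by (rule indep_extends_to_basis)
  have "?C \<subseteq> insert f M" using M(1) by blast
  then have "\<not> indep (insert f M)" using circuit_not_subset_indep[OF C(1)] by blast
  with M(3) have "basis (B' \<union> ?C) indep M"
    by (auto simp: basis_def)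
  then have "card B' \<le> card M"
    using indep_card_le_basis[of "B' \<union> ?C" M B'] iB' by blast
  moreover have "card (B' - {f}) < card B'"
    using card_Diff1_less[OF fin, of f] f by blast
  ultimately have "card (B' - {f}) < card M" by simp
  moreover have "indep (B' - {f})" using iB' by (rule indep_subset) blast
  moreover have "indep M" using M(3) by (simp add: basis_def)
  ultimately obtain e where e: "e \<in> M - (B' - {f})" "indep (insert e (B' - {f}))"
    using indep_augment by blast
  have "e \<in> ?C - {f}" "e \<notin> B'" using e(1) M(2) by auto
  have "card (insert e (B' - {f})) = card B'"
    using \<open>e \<notin> B'\<close> fin card_Suc_Diff1[of B' f] f by simp
  with e(2) have "basis E indep (insert e (B' - {f}))"
    by (rule indep_card_eq_basis[OF B'])
  with \<open>e \<in> ?C - {f}\<close> \<open>e \<notin> B'\<close> show thesis by (rule that)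
qed

lemma min_weight_basis_if_fund_circuits:
  fixes c :: "'a \<Rightarrow> real"
  assumes B: "basis E indep B"
    and opt: "\<forall>f\<in>E - B. \<forall>e\<in>fund_circuit E indep B f - {f}. c e \<le> c f"
    and B': "basis E indep B'"
  shows "sum c B \<le> sum c B'"
  using B'
proof (induction "card (B' - B)" arbitrary: B' rule: less_induct)
  case less
  have iB': "indep B'" using less.prems by (simp add: basis_def)
  then have fin: "finite B'" by (rule indep_finite)
  show ?case
  proof (cases "B' \<subseteq> B")
    case True
    then have "B' = B" by (rule basis_subset_eq[OF less.prems B])
    then show ?thesis by simp
  next
    case False
    then obtain f where f: "f \<in> B' - B" by blast
    then obtain e where e: "e \<in> fund_circuit E indep B f - {f}" "e \<notin> B'"
      and B'': "basis E indep (insert e (B' - {f}))"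
      using fund_circuit_exchange_into_basis[OF B less.prems] by blast
    have fE: "f \<in> E - B" using f iB' indep_subset_ground by blast
    have "e \<in> B" using e(1) fund_circuit(2)[OF B fE] by blast
    then have "insert e (B' - {f}) - B = (B' - B) - {f}" by blast
    moreover have "card ((B' - B) - {f}) < card (B' - B)"
      using card_Diff1_less[of "B' - B" f] fin f by blast
    ultimately have "sum c B \<le> sum c (insert e (B' - {f}))"
      using less.hyps B'' by simp
    also have "\<dots> = sum c B' - c f + c e"
      using f e(2) by (intro sum_exchange[OF fin]) auto
    also have "\<dots> \<le> sum c B'"
      using opt fE e(1) by simp
    finally show ?thesis .
  qed
qed

theorem min_weight_basis_iff_fund_circuits:
  fixes c :: "'a \<Rightarrow> real"
  assumes B: "basis E indep B"
  shows "min_weight_basis E indep c B \<longleftrightarrow>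
    (\<forall>f\<in>E - B. \<forall>e\<in>fund_circuit E indep B f - {f}. c e \<le> c f)"
proof
  assume min: "min_weight_basis E indep c B"
  show "\<forall>f\<in>E - B. \<forall>e\<in>fund_circuit E indep B f - {f}. c e \<le> c f"
  proof (intro ballI)
    fix f e assume f: "f \<in> E - B" and e: "e \<in> fund_circuit E indep B f - {f}"
    have "e \<in> B" using e fund_circuit(2)[OF B f] by blast
    moreover have "finite B" using B indep_finite by (simp add: basis_def)
    ultimately have "sum c (insert f (B - {e})) = sum c B - c e + c f"
      using f by (intro sum_exchange) auto
    moreover have "sum c B \<le> sum c (insert f (B - {e}))"
      using min basis_exchange_fund_circuit[OF B f e] by (simp add: min_weight_basis_def)
    ultimately have "sum c B \<le> sum c B - c e + c f" by simp
    then show "c e \<le> c f" by simp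
  qed
qed (use B min_weight_basis_if_fund_circuits in \<open>auto simp: min_weight_basis_def\<close>)

end

lemma uncertainty_set_bdd:
  assumes "uncertainty_set S"
  shows "bdd_above S" "bdd_below S"
proof -
  obtain \<I> where \<I>: "finite \<I>" "\<forall>I\<in>\<I>. bounded_interval I" "S = \<Union>\<I>"
    using assms unfolding uncertainty_set_def by blast
  have "bdd_above I \<and> bdd_below I" if "I \<in> \<I>" for I
    using \<I>(2) that unfolding bounded_interval_def by auto
  then show "bdd_above S" "bdd_below S"
    using \<I>(1,3) bdd_above_UN[of \<I> id] bdd_below_UN[of \<I> id] by simp_all
qed

definition consistent_values :: "('a \<Rightarrow> real set) \<Rightarrow> ('a \<Rightarrow> real) \<Rightarrow> 'a set \<Rightarrow> 'a \<Rightarrow> real set" where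
  "consistent_values A w Q e = {x \<in> A e. e \<in> Q \<longrightarrow> x = w e}"

lemma consistent_assignment_iff:
  "Q \<subseteq> E \<Longrightarrow> consistent_assignment E A w Q w' \<longleftrightarrow> (\<forall>e\<in>E. w' e \<in> consistent_values A w Q e)"
  unfolding consistent_assignment_def consistent_values_def by blast

lemma consistent_values_eq:
  "w e \<in> A e \<Longrightarrow> consistent_values A w Q e = (if e \<in> Q then {w e} else A e)"
  by (auto simp: consistent_values_def)

lemma UQ_eq_Sup_consistent_values: "w e \<in> A e \<Longrightarrow> UQ A w Q e = Sup (consistent_values A w Q e)"
  by (simp add: consistent_values_eq UQ_def U_def)

lemma LQ_eq_Inf_consistent_values: "w e \<in> A e \<Longrightarrow> LQ A w Q e = Inf (consistent_values A w Q e)"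
  by (simp add: consistent_values_eq LQ_def L_def)

lemma consistent_assignments_le_iff:
  assumes A: "\<forall>x\<in>E. uncertainty_set (A x) \<and> w x \<in> A x" and Q: "Q \<subseteq> E"
    and e: "e \<in> E" and f: "f \<in> E" and "e \<noteq> f"
  shows "(\<forall>w'. consistent_assignment E A w Q w' \<longrightarrow> w' e \<le> w' f) \<longleftrightarrow> UQ A w Q e \<le> LQ A w Q f"
proof -
  let ?S = "consistent_values A w Q"
  have S_sub: "?S x \<subseteq> A x" for x by (auto simp: consistent_values_def)
  have S: "w x \<in> ?S x" "bdd_above (?S x)" "bdd_below (?S x)" if "x \<in> E" for x
  proof -
    from A that have "uncertainty_set (A x)" "w x \<in> A x" by auto
    then show "w x \<in> ?S x" "bdd_above (?S x)" "bdd_below (?S x)"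
      using uncertainty_set_bdd bdd_above_mono[OF _ S_sub] bdd_below_mono[OF _ S_sub]
      by (auto simp: consistent_values_def)
  qed
  have "(\<forall>w'. consistent_assignment E A w Q w' \<longrightarrow> w' e \<le> w' f) \<longleftrightarrow> (\<forall>a\<in>?S e. \<forall>b\<in>?S f. a \<le> b)"
  proof
    assume H: "\<forall>w'. consistent_assignment E A w Q w' \<longrightarrow> w' e \<le> w' f"
    show "\<forall>a\<in>?S e. \<forall>b\<in>?S f. a \<le> b"
    proof (intro ballI)
      fix a b assume "a \<in> ?S e" "b \<in> ?S f"
      then have "consistent_assignment E A w Q (w(e := a, f := b))"
        using S(1) consistent_assignment_iff[OF Q] by auto
      with H \<open>e \<noteq> f\<close> show "a \<le> b" by force
    qed
  next
    assume H: "\<forall>a\<in>?S e. \<forall>b\<in>?S f. a \<le> b"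
    show "\<forall>w'. consistent_assignment E A w Q w' \<longrightarrow> w' e \<le> w' f"
    proof (intro allI impI)
      fix w' assume "consistent_assignment E A w Q w'"
      then have "w' e \<in> ?S e" "w' f \<in> ?S f" using consistent_assignment_iff[OF Q] e f by blast+
      with H show "w' e \<le> w' f" by blast
    qed
  qed
  also have "\<dots> \<longleftrightarrow> Sup (?S e) \<le> Inf (?S f)"
    using cSup_le_cInf_iff S e f by (metis empty_iff)
  also have "\<dots> \<longleftrightarrow> UQ A w Q e \<le> LQ A w Q f"
    using A e f by (simp add: UQ_eq_Sup_consistent_values LQ_eq_Inf_consistent_values)
  finally show ?thesis .
qed

theorem corollary9:
  fixes E :: "'a set" and indep :: "'a set \<Rightarrow> bool"
    and A :: "'a \<Rightarrow> real set" and w :: "'a \<Rightarrow> real"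
    and B Q :: "'a set"
  assumes "weighted_uncertainty_matroid E indep A w"
    and "min_weight_basis E indep w B"
    and "Q \<subseteq> E"
  shows "verifies E indep A w Q B \<longleftrightarrow>
    (\<forall>f\<in>E - B. \<forall>e\<in>fund_circuit E indep B f - {f}. UQ A w Q e \<le> LQ A w Q f)"
proof -
  interpret finite_matroid E indep
    using assms(1) by unfold_locales (simp add: weighted_uncertainty_matroid_def)
  have A: "\<forall>x\<in>E. uncertainty_set (A x) \<and> w x \<in> A x"
    using assms(1) by (simp add: weighted_uncertainty_matroid_def)
  have B: "basis E indep B" using assms(2) by (simp add: min_weight_basis_def)
  have "verifies E indep A w Q B \<longleftrightarrow> (\<forall>w'. consistent_assignment E A w Q w' \<longrightarrow>
      (\<forall>f\<in>E - B. \<forall>e\<in>fund_circuit E indep B f - {f}. w' e \<le> w' f))"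
    unfolding verifies_def using min_weight_basis_iff_fund_circuits[OF B] by simp
  also have "\<dots> \<longleftrightarrow> (\<forall>f\<in>E - B. \<forall>e\<in>fund_circuit E indep B f - {f}.
      \<forall>w'. consistent_assignment E A w Q w' \<longrightarrow> w' e \<le> w' f)"
    by blast
  also have "\<dots> \<longleftrightarrow> (\<forall>f\<in>E - B. \<forall>e\<in>fund_circuit E indep B f - {f}. UQ A w Q e \<le> LQ A w Q f)"
  proof (intro ball_cong refl)
    fix f e assume f: "f \<in> E - B" and e: "e \<in> fund_circuit E indep B f - {f}"
    have "e \<in> E" using fund_circuit(1)[OF B f] e by (auto simp: circuit_def)
    with f e show "(\<forall>w'. consistent_assignment E A w Q w' \<longrightarrow> w' e \<le> w' f) \<longleftrightarrow>
        UQ A w Q e \<le> LQ A w Q f"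
      using consistent_assignments_le_iff[OF A assms(3)] by blast
  qed
  finally show ?thesis .
qed

end
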